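(* Let $A\in M_2(\mathbb{C})$ with $\operatorname{tr}A=0$ and $q\in\mathbb{R}$. Let $M_A=I\otimes A-q\,A^T\otimes I\in M_4(\mathbb{C})$. Then the operator norm of $M_A$ satisfies $$\|M_A\|_{op}^2\le (1+q^2)\,\|A\|_F^2 .$$
   Context: $\|X\|_F=\sqrt{\operatorname{tr}(XX^\dagger)}$ is the Frobenius norm, $\|X\|_{op}$ is the largest singular value of $X$, $I$ is the $2\times 2$ identity, $A^T$ is the transpose and $\otimes$ the Kronecker product. (With the vectorization $|B\rangle\!\rangle=\sum_{i,j}b_{ij}\,e_j\otimes e_i$ of $B=(b_{ij})$, one has $|AB-qBA\rangle\!\rangle=M_A|B\rangle\!\rangle$ and $\|B\|_F=\||B\rangle\!\rangle\|$.) *)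

theory Defs
  imports "HOL-Analysis.Analysis"
begin

text \<open>The index set of the product space is the
  product type of the index sets; the pair (a,b) corresponds to the basis vector e_a (x) e_b,
  i.e. the usual lexicographic (Kronecker) ordering.\<close>
definition kron :: "complex^'n^'n \<Rightarrow> complex^'m^'m \<Rightarrow> complex^('n \<times> 'm)^('n \<times> 'm)" where
  "kron A B = (\<chi> r c. A $ fst r $ fst c * B $ snd r $ snd c)"

definition conj_transpose :: "complex^'n^'m \<Rightarrow> complex^'m^'n" where
  "conj_transpose A = (\<chi> i j. cnj (A $ j $ i))"

definition frob_norm :: "complex^'n^'n \<Rightarrow> real" where
  "frob_norm A = sqrt (Re (trace (A ** conj_transpose A)))"

definition op_norm :: "complex^'n^'m \<Rightarrow> real" where
  "op_norm M = onorm (\<lambda>v. M *v v)"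

definition M_op :: "real \<Rightarrow> complex^2^2 \<Rightarrow> complex^(2 \<times> 2)^(2 \<times> 2)" where
  "M_op q A = kron (mat 1) A - (\<chi> r c. complex_of_real q * kron (transpose A) (mat 1) $ r $ c)"

end

theory Submission
  imports Defs
begin

text \<open>Write the traceless A as a\<cdot>\<sigma> and the argument B as t I + c\<cdot>\<sigma> in the Pauli basis, so
  that \<open>\<parallel>A\<parallel>\<^sub>F\<^sup>2 = 2|a|\<^sup>2\<close> and \<open>\<parallel>B\<parallel>\<^sub>F\<^sup>2 = 2(|t|\<^sup>2 + |c|\<^sup>2)\<close>. From
  \<open>(a\<cdot>\<sigma>)(c\<cdot>\<sigma>) = (a\<cdot>c) I + i (a\<times>c)\<cdot>\<sigma>\<close> one gets, with u = 1 - q and w = 1 + q,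
  \<open>AB - qBA = u (a\<cdot>c) I + (u t a + i w (a\<times>c))\<cdot>\<sigma>\<close>.
  Expanding the square norm, the cross term is estimated by AM-GM against the slack left
  by the complex Lagrange identities \<open>|a|\<^sup>2|c|\<^sup>2 = |a\<cdot>c|\<^sup>2 + |a\<times>c\<^sup>*|\<^sup>2 \<ge> |a\<times>c|\<^sup>2\<close>,
  which yields \<open>\<parallel>AB - qBA\<parallel>\<^sub>F\<^sup>2 \<le> (u\<^sup>2 + w\<^sup>2)/2 \<cdot> \<parallel>A\<parallel>\<^sub>F\<^sup>2 \<parallel>B\<parallel>\<^sub>F\<^sup>2\<close>.\<close>

lemma cmod_add_square: "(cmod (x + y))\<^sup>2 = (cmod x)\<^sup>2 + (cmod y)\<^sup>2 + 2 * Re (x * cnj y)"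
proof -
  have "complex_of_real ((cmod (x + y))\<^sup>2)
      = complex_of_real ((cmod x)\<^sup>2 + (cmod y)\<^sup>2) + (x * cnj y + cnj (x * cnj y))"
    unfolding of_real_add complex_norm_square by (simp add: algebra_simps)
  also have "x * cnj y + cnj (x * cnj y) = complex_of_real (2 * Re (x * cnj y))"
    by (rule complex_add_cnj)
  finally show ?thesis by (metis of_real_add of_real_eq_iff)
qed

lemma cmod_parallelogram: "(cmod (x + y))\<^sup>2 + (cmod (x - y))\<^sup>2 = 2 * ((cmod x)\<^sup>2 + (cmod y)\<^sup>2)"
  using cmod_add_square[of x y] cmod_add_square[of x "- y"] by simp

lemma lagrange_identity_complex3:
  fixes a1 a2 a3 b1 b2 b3 :: complex
  shows "((cmod a1)\<^sup>2 + (cmod a2)\<^sup>2 + (cmod a3)\<^sup>2) * ((cmod b1)\<^sup>2 + (cmod b2)\<^sup>2 + (cmod b3)\<^sup>2)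
    = (cmod (a1 * cnj b1 + a2 * cnj b2 + a3 * cnj b3))\<^sup>2 + (cmod (a2 * b3 - a3 * b2))\<^sup>2
      + (cmod (a3 * b1 - a1 * b3))\<^sup>2 + (cmod (a1 * b2 - a2 * b1))\<^sup>2"
proof -
  have "complex_of_real (((cmod a1)\<^sup>2 + (cmod a2)\<^sup>2 + (cmod a3)\<^sup>2) * ((cmod b1)\<^sup>2 + (cmod b2)\<^sup>2 + (cmod b3)\<^sup>2))
    = complex_of_real ((cmod (a1 * cnj b1 + a2 * cnj b2 + a3 * cnj b3))\<^sup>2 + (cmod (a2 * b3 - a3 * b2))\<^sup>2
      + (cmod (a3 * b1 - a1 * b3))\<^sup>2 + (cmod (a1 * b2 - a2 * b1))\<^sup>2)"
    unfolding of_real_mult of_real_add complex_norm_square by (simp add: algebra_simps)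
  then show ?thesis by (rule of_real_eq_iff[THEN iffD1])
qed

lemma cross_norm_le:
  fixes a1 a2 a3 c1 c2 c3 :: complex
  shows "(cmod (a2 * c3 - a3 * c2))\<^sup>2 + (cmod (a3 * c1 - a1 * c3))\<^sup>2 + (cmod (a1 * c2 - a2 * c1))\<^sup>2
    \<le> ((cmod a1)\<^sup>2 + (cmod a2)\<^sup>2 + (cmod a3)\<^sup>2) * ((cmod c1)\<^sup>2 + (cmod c2)\<^sup>2 + (cmod c3)\<^sup>2)"
  using lagrange_identity_complex3[of a1 a2 a3 c1 c2 c3] by simp

text \<open>The quantities \<open>a\<cdot>c\<close> and \<open>a\<cdot>(a\<times>c)\<^sup>*\<close> share the budget \<open>|a|\<^sup>2|c|\<^sup>2\<close>: the first is
  the defect of \<open>|a\<times>c\<^sup>*|\<^sup>2\<close> in the Lagrange identity, the second is bounded by Cauchy-Schwarz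
  through \<open>a\<times>c\<^sup>*\<close>.\<close>

lemma dot_cross_bound:
  fixes a1 a2 a3 c1 c2 c3 :: complex
  defines "na \<equiv> (cmod a1)\<^sup>2 + (cmod a2)\<^sup>2 + (cmod a3)\<^sup>2"
    and "nc \<equiv> (cmod c1)\<^sup>2 + (cmod c2)\<^sup>2 + (cmod c3)\<^sup>2"
  shows "na * (cmod (a1 * c1 + a2 * c2 + a3 * c3))\<^sup>2
      + (cmod (a1 * cnj (a2 * c3 - a3 * c2) + a2 * cnj (a3 * c1 - a1 * c3) + a3 * cnj (a1 * c2 - a2 * c1)))\<^sup>2
    \<le> na * na * nc"
proof -
  define Y1 where "Y1 = a2 * cnj c3 - a3 * cnj c2"
  define Y2 where "Y2 = a3 * cnj c1 - a1 * cnj c3"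
  define Y3 where "Y3 = a1 * cnj c2 - a2 * cnj c1"
  define SY where "SY = (cmod Y1)\<^sup>2 + (cmod Y2)\<^sup>2 + (cmod Y3)\<^sup>2"
  have defect: "na * nc = (cmod (a1 * c1 + a2 * c2 + a3 * c3))\<^sup>2 + SY"
    using lagrange_identity_complex3[of a1 a2 a3 "cnj c1" "cnj c2" "cnj c3"]
    unfolding SY_def na_def nc_def Y1_def Y2_def Y3_def by simp
  have "a1 * cnj (a2 * c3 - a3 * c2) + a2 * cnj (a3 * c1 - a1 * c3) + a3 * cnj (a1 * c2 - a2 * c1)
      = - (Y1 * cnj a1 + Y2 * cnj a2 + Y3 * cnj a3)"
    unfolding Y1_def Y2_def Y3_def by (simp add: algebra_simps)
  then have "(cmod (a1 * cnj (a2 * c3 - a3 * c2) + a2 * cnj (a3 * c1 - a1 * c3) + a3 * cnj (a1 * c2 - a2 * c1)))\<^sup>2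
      = (cmod (Y1 * cnj a1 + Y2 * cnj a2 + Y3 * cnj a3))\<^sup>2"
    by (simp only: norm_minus_cancel)
  also have "\<dots> \<le> SY * na"
    using lagrange_identity_complex3[of Y1 Y2 Y3 a1 a2 a3] unfolding SY_def na_def by simp
  also have "\<dots> = na * na * nc - na * (cmod (a1 * c1 + a2 * c2 + a3 * c3))\<^sup>2"
    using defect by (simp add: algebra_simps)
  finally show ?thesis by simp
qed

lemma pauli_coordinates_bound:
  fixes a1 a2 a3 t c1 c2 c3 :: complex and u w :: real
  shows "u\<^sup>2 * (cmod (a1 * c1 + a2 * c2 + a3 * c3))\<^sup>2
     + (cmod (u * t * a1 + \<i> * w * (a2 * c3 - a3 * c2)))\<^sup>2
     + (cmod (u * t * a2 + \<i> * w * (a3 * c1 - a1 * c3)))\<^sup>2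
     + (cmod (u * t * a3 + \<i> * w * (a1 * c2 - a2 * c1)))\<^sup>2
   \<le> (u\<^sup>2 + w\<^sup>2) * ((cmod a1)\<^sup>2 + (cmod a2)\<^sup>2 + (cmod a3)\<^sup>2)
       * ((cmod t)\<^sup>2 + (cmod c1)\<^sup>2 + (cmod c2)\<^sup>2 + (cmod c3)\<^sup>2)"
proof -
  define na where "na = (cmod a1)\<^sup>2 + (cmod a2)\<^sup>2 + (cmod a3)\<^sup>2"
  define nc where "nc = (cmod c1)\<^sup>2 + (cmod c2)\<^sup>2 + (cmod c3)\<^sup>2"
  define X1 where "X1 = a2 * c3 - a3 * c2"
  define X2 where "X2 = a3 * c1 - a1 * c3"
  define X3 where "X3 = a1 * c2 - a2 * c1"
  define SX where "SX = (cmod X1)\<^sup>2 + (cmod X2)\<^sup>2 + (cmod X3)\<^sup>2"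
  define P where "P = a1 * c1 + a2 * c2 + a3 * c3"
  define E where "E = a1 * cnj X1 + a2 * cnj X2 + a3 * cnj X3"
  have na_nonneg: "na \<ge> 0" by (simp add: na_def)
  have cross: "SX \<le> na * nc"
    using cross_norm_le[of a2 c3 a3 c2 c1 a1] unfolding SX_def na_def nc_def X1_def X2_def X3_def
    by simp
  have dot_cross: "na * (cmod P)\<^sup>2 + (cmod E)\<^sup>2 \<le> na * na * nc"
    using dot_cross_bound[of a1 a2 a3 c1 c2 c3]
    unfolding na_def nc_def P_def E_def X1_def X2_def X3_def by simp
  have expand: "(cmod (u * t * a1 + \<i> * w * X1))\<^sup>2 + (cmod (u * t * a2 + \<i> * w * X2))\<^sup>2
      + (cmod (u * t * a3 + \<i> * w * X3))\<^sup>2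
    = u\<^sup>2 * (cmod t)\<^sup>2 * na + w\<^sup>2 * SX + 2 * (u * w * Re (- \<i> * t * E))"
  proof -
    have square: "(cmod (u * t * a + \<i> * w * X))\<^sup>2
        = u\<^sup>2 * (cmod t)\<^sup>2 * (cmod a)\<^sup>2 + w\<^sup>2 * (cmod X)\<^sup>2 + 2 * (u * w * Re (- \<i> * t * (a * cnj X)))"
      for a X
      unfolding cmod_add_square by (simp add: norm_mult power_mult_distrib algebra_simps)
    show ?thesis unfolding square E_def na_def SX_def by (simp add: algebra_simps)
  qed
  have am_gm: "2 * (u * w * Re (- \<i> * t * E)) * na \<le> w\<^sup>2 * na\<^sup>2 * (cmod t)\<^sup>2 + u\<^sup>2 * (cmod E)\<^sup>2"
  proof -
    have "u * w * Re (- \<i> * t * E) \<le> \<bar>u\<bar> * \<bar>w\<bar> * \<bar>Re (- \<i> * t * E)\<bar>"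
      by (metis abs_ge_self abs_mult)
    also have "\<dots> \<le> \<bar>u\<bar> * \<bar>w\<bar> * (cmod t * cmod E)"
      using abs_Re_le_cmod[of "- \<i> * t * E"] by (intro mult_left_mono) (auto simp: norm_mult)
    finally have "2 * (u * w * Re (- \<i> * t * E)) * na \<le> 2 * (\<bar>w\<bar> * na * cmod t) * (\<bar>u\<bar> * cmod E)"
      using na_nonneg mult_right_mono by (fastforce simp: algebra_simps)
    also have "\<dots> \<le> (\<bar>w\<bar> * na * cmod t)\<^sup>2 + (\<bar>u\<bar> * cmod E)\<^sup>2"
      by (rule sum_squares_bound)
    finally show ?thesis by (simp add: power_mult_distrib)
  qed
  have "u\<^sup>2 * (cmod P)\<^sup>2 + (u\<^sup>2 * (cmod t)\<^sup>2 * na + w\<^sup>2 * SX + 2 * (u * w * Re (- \<i> * t * E)))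
     \<le> (u\<^sup>2 + w\<^sup>2) * na * ((cmod t)\<^sup>2 + nc)"
  proof (cases "na = 0")
    case True
    then have "a1 = 0" "a2 = 0" "a3 = 0"
      unfolding na_def by (auto simp: add_nonneg_eq_0_iff)
    then show ?thesis by (simp add: P_def E_def SX_def X1_def X2_def X3_def na_def)
  next
    case False
    have "u\<^sup>2 * (na * (cmod P)\<^sup>2) \<le> u\<^sup>2 * (na * na * nc - (cmod E)\<^sup>2)"
      using dot_cross by (intro mult_left_mono) auto
    moreover have "w\<^sup>2 * (na * SX) \<le> w\<^sup>2 * (na * (na * nc))"
      using cross na_nonneg by (intro mult_left_mono) auto
    ultimately have "na * (u\<^sup>2 * (cmod P)\<^sup>2 + (u\<^sup>2 * (cmod t)\<^sup>2 * na + w\<^sup>2 * SX + 2 * (u * w * Re (- \<i> * t * E))))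
        \<le> na * ((u\<^sup>2 + w\<^sup>2) * na * ((cmod t)\<^sup>2 + nc))"
      using am_gm by (simp add: algebra_simps power2_eq_square)
    then show ?thesis
      using False na_nonneg by (simp add: mult_le_cancel_left_pos)
  qed
  then show ?thesis
    using expand unfolding P_def X1_def X2_def X3_def na_def nc_def by (simp add: algebra_simps)
qed

text \<open>The four left-hand terms are the entries of AB - qBA for A = [[a, b], [c, -a]] and
  B = [[x11, x12], [x21, x22]]; the proof passes to the Pauli coordinates of A and B.\<close>

lemma twisted_commutator_entries_bound:
  fixes a b c x11 x12 x21 x22 :: complex and q :: real
  shows "(cmod ((a * x11 + b * x21) - q * (x11 * a + x12 * c)))\<^sup>2
       + (cmod ((a * x12 + b * x22) - q * (x11 * b - x12 * a)))\<^sup>2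
       + (cmod ((c * x11 - a * x21) - q * (x21 * a + x22 * c)))\<^sup>2
       + (cmod ((c * x12 - a * x22) - q * (x21 * b - x22 * a)))\<^sup>2
     \<le> (1 + q\<^sup>2) * (2 * (cmod a)\<^sup>2 + (cmod b)\<^sup>2 + (cmod c)\<^sup>2)
        * ((cmod x11)\<^sup>2 + (cmod x12)\<^sup>2 + (cmod x21)\<^sup>2 + (cmod x22)\<^sup>2)"
proof -
  have ii: "\<i> * \<i> = (-1::complex)" by simp
  define a1 where "a1 = (b + c) / 2"
  define a2 where "a2 = \<i> * (b - c) / 2"
  define t where "t = (x11 + x22) / 2"
  define c1 where "c1 = (x12 + x21) / 2"
  define c2 where "c2 = \<i> * (x12 - x21) / 2"
  define c3 where "c3 = (x11 - x22) / 2"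
  define u :: real where "u = 1 - q"
  define w :: real where "w = 1 + q"
  define z0 where "z0 = complex_of_real u * (a1 * c1 + a2 * c2 + a * c3)"
  define z1 where "z1 = u * t * a1 + \<i> * w * (a2 * c3 - a * c2)"
  define z2 where "z2 = u * t * a2 + \<i> * w * (a * c1 - a1 * c3)"
  define z3 where "z3 = u * t * a + \<i> * w * (a1 * c2 - a2 * c1)"
  have A_coords: "b = a1 - \<i> * a2" "c = a1 + \<i> * a2"
    unfolding a1_def a2_def using ii by (simp_all add: field_simps)
  have B_coords: "x11 = t + c3" "x22 = t - c3" "x12 = c1 - \<i> * c2" "x21 = c1 + \<i> * c2"
    unfolding t_def c1_def c2_def c3_def using ii by (simp_all add: field_simps)
  have entries:
    "(a * x11 + b * x21) - q * (x11 * a + x12 * c) = z0 + z3"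
    "(c * x12 - a * x22) - q * (x21 * b - x22 * a) = z0 - z3"
    "(a * x12 + b * x22) - q * (x11 * b - x12 * a) = z1 - \<i> * z2"
    "(c * x11 - a * x21) - q * (x21 * a + x22 * c) = z1 + \<i> * z2"
    unfolding A_coords B_coords z0_def z1_def z2_def z3_def u_def w_def using ii
    by (simp_all add: field_simps)
  have entries_norm: "(cmod (z0 + z3))\<^sup>2 + (cmod (z1 - \<i> * z2))\<^sup>2 + (cmod (z1 + \<i> * z2))\<^sup>2
      + (cmod (z0 - z3))\<^sup>2 = 2 * ((cmod z0)\<^sup>2 + (cmod z1)\<^sup>2 + (cmod z2)\<^sup>2 + (cmod z3)\<^sup>2)"
    using cmod_parallelogram[of z0 z3] cmod_parallelogram[of z1 "\<i> * z2"] by (simp add: norm_mult)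
  have A_norm: "2 * (cmod a)\<^sup>2 + (cmod b)\<^sup>2 + (cmod c)\<^sup>2 = 2 * ((cmod a1)\<^sup>2 + (cmod a2)\<^sup>2 + (cmod a)\<^sup>2)"
    using cmod_parallelogram[of a1 "\<i> * a2"] unfolding A_coords by (simp add: norm_mult)
  have B_norm: "(cmod x11)\<^sup>2 + (cmod x12)\<^sup>2 + (cmod x21)\<^sup>2 + (cmod x22)\<^sup>2
      = 2 * ((cmod t)\<^sup>2 + (cmod c1)\<^sup>2 + (cmod c2)\<^sup>2 + (cmod c3)\<^sup>2)"
    using cmod_parallelogram[of t c3] cmod_parallelogram[of c1 "\<i> * c2"] unfolding B_coords
    by (simp add: norm_mult)
  have pauli: "(cmod z0)\<^sup>2 + (cmod z1)\<^sup>2 + (cmod z2)\<^sup>2 + (cmod z3)\<^sup>2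
     \<le> (u\<^sup>2 + w\<^sup>2) * ((cmod a1)\<^sup>2 + (cmod a2)\<^sup>2 + (cmod a)\<^sup>2)
        * ((cmod t)\<^sup>2 + (cmod c1)\<^sup>2 + (cmod c2)\<^sup>2 + (cmod c3)\<^sup>2)"
    using pauli_coordinates_bound[of u a1 c1 a2 c2 a c3 t w] unfolding z0_def z1_def z2_def z3_def
    by (simp add: norm_mult power_mult_distrib)
  have uw: "u\<^sup>2 + w\<^sup>2 = 2 * (1 + q\<^sup>2)"
    unfolding u_def w_def by (simp add: power2_eq_square algebra_simps)
  show ?thesis
    unfolding entries A_norm B_norm using entries_norm pauli unfolding uw by (simp add: algebra_simps)
qed

lemma sum_UNIV_2x2:
  "sum f (UNIV :: (2 \<times> 2) set) = f (1, 1) + f (1, 2) + f (2, 1) + f (2, 2)"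
proof -
  have "sum f (UNIV :: (2 \<times> 2) set) = (\<Sum>x\<in>UNIV. \<Sum>y\<in>UNIV. f (x, y))"
    by (simp add: sum.cartesian_product UNIV_Times_UNIV[symmetric] del: UNIV_Times_UNIV)
  then show ?thesis by (simp add: sum_2 add.assoc)
qed

lemma norm_square_vec_2x2:
  "(norm (v :: complex^(2 \<times> 2)))\<^sup>2
    = (cmod (v $ (1, 1)))\<^sup>2 + (cmod (v $ (1, 2)))\<^sup>2 + (cmod (v $ (2, 1)))\<^sup>2 + (cmod (v $ (2, 2)))\<^sup>2"
  unfolding norm_vec_def L2_set_def by (simp add: sum_UNIV_2x2 sum_nonneg)

lemma frob_norm_square: "(frob_norm A)\<^sup>2 = (\<Sum>i\<in>UNIV. \<Sum>j\<in>UNIV. (cmod (A $ i $ j))\<^sup>2)"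
proof -
  have "Re (z * cnj z) = (cmod z)\<^sup>2" for z
    by (metis Re_complex_of_real complex_norm_square)
  then have "Re (trace (A ** conj_transpose A)) = (\<Sum>i\<in>UNIV. \<Sum>j\<in>UNIV. (cmod (A $ i $ j))\<^sup>2)"
    unfolding trace_def matrix_matrix_mult_def conj_transpose_def by simp
  moreover have "(\<Sum>i\<in>UNIV. \<Sum>j\<in>UNIV. (cmod (A $ i $ j))\<^sup>2) \<ge> 0"
    by (simp add: sum_nonneg)
  ultimately show ?thesis unfolding frob_norm_def by simp
qed

lemma M_op_mult_vec_entry:
  "(M_op q A *v v) $ (i, j)
    = (\<Sum>l\<in>UNIV. A $ j $ l * v $ (i, l)) - q * (\<Sum>k\<in>UNIV. A $ k $ i * v $ (k, j))"
  unfolding M_op_def kron_def matrix_vector_mult_def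
  using exhaust_2[of i] exhaust_2[of j]
  by (elim disjE) (simp_all add: sum_UNIV_2x2 sum_2 mat_def transpose_def algebra_simps)

lemma op_norm_square_le:
  fixes M :: "complex^'n^'m"
  assumes "0 \<le> C" and "\<And>v. (norm (M *v v))\<^sup>2 \<le> C * (norm v)\<^sup>2"
  shows "(op_norm M)\<^sup>2 \<le> C"
proof -
  have "norm (M *v v) \<le> sqrt C * norm v" for v
    using assms real_le_rsqrt[OF assms(2)[of v]] by (simp add: real_sqrt_mult)
  then have "op_norm M \<le> sqrt C"
    unfolding op_norm_def by (rule onorm_le)
  moreover have "0 \<le> op_norm M"
    unfolding op_norm_def by (rule onorm_pos_le) (rule matrix_vector_mul_bounded_linear)
  ultimately show ?thesis
    using assms(1) by (metis power_mono real_sqrt_pow2)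
qed

theorem mainTheorem6:
  fixes A :: "complex^2^2" and q :: real
  assumes "trace A = 0"
  shows "(op_norm (M_op q A))\<^sup>2 \<le> (1 + q\<^sup>2) * (frob_norm A)\<^sup>2"
proof (rule op_norm_square_le)
  have traceless: "A $ 2 $ 2 = - A $ 1 $ 1"
    using assms unfolding trace_def by (simp add: sum_2 eq_neg_iff_add_eq_0 add.commute)
  have frob: "(frob_norm A)\<^sup>2 = 2 * (cmod (A $ 1 $ 1))\<^sup>2 + (cmod (A $ 1 $ 2))\<^sup>2 + (cmod (A $ 2 $ 1))\<^sup>2"
    by (simp add: frob_norm_square sum_2 traceless)
  \<comment> \<open>the vectorisation stores the entry \<open>b\<^sub>i\<^sub>j\<close> of B at \<open>v $ (j, i)\<close>\<close>
  show "(norm (M_op q A *v v))\<^sup>2 \<le> (1 + q\<^sup>2) * (frob_norm A)\<^sup>2 * (norm v)\<^sup>2" for v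
    using twisted_commutator_entries_bound[of "A $ 1 $ 1" "v $ (1, 1)" "A $ 1 $ 2" "v $ (1, 2)" q
        "v $ (2, 1)" "A $ 2 $ 1" "v $ (2, 2)"]
    unfolding norm_square_vec_2x2 M_op_mult_vec_entry frob by (simp add: sum_2 traceless algebra_simps)
qed simp

end
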